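(* Let $u,\gamma,\lambda_A,\lambda_{CCN},\lambda_{CP}>0$, $\mu\in(0,1]$, $\varpi\in\mathbb{R}$, $T>0$, let $F$ be a differentiable cumulative distribution function and $G$ a continuous cumulative distribution function. Let $D:[0,T]\to\mathbb{R}$ be differentiable with $D(0)=u-\varpi$, let $b(r)=e^{-\gamma r}u-D(r)$ (assumed continuous), and set $W(x)=e^{\lambda_{CCN}(F(x)-1)}\big(1-e^{\lambda_{CP}(G(x)-1)}\big)$ and \[ \mathrm{Pay}(r)=\big(1-e^{\lambda_{CP}(G(b(r))-1)}\big)\Big[e^{-\lambda_{CCN}}b(T)+\int_{b(T)}^{b(r)}\lambda_{CCN}e^{\lambda_{CCN}(F(x)-1)}\,x\,F'(x)\,dx\Big]. \] Suppose that for every $r\in(0,T]$ and every sufficiently small $\delta>0$ (with $\delta\mu\lambda_A<1$), \[ D(r)=\frac{1}{1+\gamma\delta}\Big[\big(1-\mu\lambda_A\delta\,W(b(r))\big)D(r-\delta)+\mu\lambda_A\delta\big(W(b(r))e^{-\gamma r}u-\mathrm{Pay}(r)\big)\Big]. \] Then for every $r\in(0,T]$, \[ \gamma D(r)=-D'(r)+\mu\lambda_A\Big(W(b(r))\big(e^{-\gamma r}u-D(r)\big)-\mathrm{Pay}(r)\Big). \]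
   Context: Model (second-price auction market between cloud managers and private cloud providers): auctions occur at Poisson rate $\lambda_A$; a fraction $\mu$ of managers bid actively; the number of competing managers is Poisson with mean $\lambda_{CCN}$ and the number of providers Poisson with mean $\lambda_{CP}$; $F$ is the stationary cdf of managers' bids, $G$ the cdf of providers' offered prices; $T$ is the total participation time and $r$ the residual participation time; a manager bids $b(r)=e^{-\gamma r}u-D(r)$, with $u$ the utility, $\gamma$ the rate of time preference and $D(r)$ the discounted expected utility; $W(b)$ is the probability of winning with at least one provider offering a lower price; the winner pays the second-highest bid, whose expected value is $\mathrm{Pay}(r)$; at $r=0$ the manager buys at flat price $\varpi$, so $D(0)=u-\varpi$. *)

theory Defs
  imports "HOL-Analysis.Analysis"
begin

definition is_cdf :: "(real \<Rightarrow> real) \<Rightarrow> bool" where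
  "is_cdf F \<longleftrightarrow> mono F \<and> (\<forall>x. continuous (at_right x) F)
     \<and> (F \<longlongrightarrow> 0) at_bot \<and> (F \<longlongrightarrow> 1) at_top"

definition oint :: "real \<Rightarrow> real \<Rightarrow> (real \<Rightarrow> real) \<Rightarrow> real" where
  "oint a b f = (if a \<le> b then integral {a..b} f else - integral {b..a} f)"

text \<open>Probability of winning with at least one provider offering a lower price.\<close>
definition Wwin :: "real \<Rightarrow> real \<Rightarrow> (real \<Rightarrow> real) \<Rightarrow> (real \<Rightarrow> real) \<Rightarrow> real \<Rightarrow> real" where
  "Wwin lCCN lCP F G x = exp (lCCN * (F x - 1)) * (1 - exp (lCP * (G x - 1)))"

definition Pay :: "real \<Rightarrow> real \<Rightarrow> (real \<Rightarrow> real) \<Rightarrow> (real \<Rightarrow> real) \<Rightarrow> (real \<Rightarrow> real)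
                   \<Rightarrow> real \<Rightarrow> real \<Rightarrow> real" where
  "Pay lCCN lCP F G b T r =
     (1 - exp (lCP * (G (b r) - 1))) *
     (exp (- lCCN) * b T +
      oint (b T) (b r) (\<lambda>x. lCCN * exp (lCCN * (F x - 1)) * x * deriv F x))"

end

theory Submission
  imports Defs
begin

text \<open>For fixed r the bid b(r), and with it W(b(r)) and Pay(r), are constants, so the recursion
  is a linear relation between D(r) and D(r - \<delta>). Solving it for the backward difference
  quotient (D(r) - D(r - \<delta>)) / \<delta> and letting \<delta> \<down> 0 gives the differential equation.\<close>

lemma filterlim_left_shift_at_within:
  fixes x a b :: real
  assumes "a < x" "x \<le> b"
  shows "filterlim (\<lambda>\<delta>. x - \<delta>) (at x within {a..b}) (at_right 0)"
proof (rule filterlim_at_withinI)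
  show "((\<lambda>\<delta>. x - \<delta>) \<longlongrightarrow> x) (at_right 0)"
    using tendsto_diff[OF tendsto_const[of x] tendsto_ident_at[of 0 "{0<..}"]] by simp
  have "\<forall>\<^sub>F \<delta> in at_right 0. \<delta> < x - a"
    using order_tendstoD(2)[OF tendsto_ident_at[of 0 "{0<..}"], of "x - a"] assms by simp
  moreover have "\<forall>\<^sub>F \<delta> in at_right (0::real). \<delta> > 0"
    by (simp add: eventually_at_right_less)
  ultimately show "\<forall>\<^sub>F \<delta> in at_right 0. x - \<delta> \<in> {a..b} - {x}"
    by eventually_elim (use assms in auto)
qed

lemma has_real_derivative_imp_backward_quotient_tendsto:
  fixes f :: "real \<Rightarrow> real"
  assumes "(f has_real_derivative f') (at x within {a..b})" "a < x" "x \<le> b"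
  shows "((\<lambda>\<delta>. (f x - f (x - \<delta>)) / \<delta>) \<longlongrightarrow> f') (at_right 0)"
proof -
  have "((\<lambda>y. (f y - f x) / (y - x)) \<longlongrightarrow> f') (at x within {a..b})"
    using assms(1) by (simp add: has_field_derivative_iff)
  from filterlim_compose[OF this filterlim_left_shift_at_within[OF assms(2,3)]]
  show ?thesis
    by (simp add: minus_divide_left)
qed

lemma backward_quotient_tendsto_imp_left_continuous:
  fixes f :: "real \<Rightarrow> real"
  assumes "((\<lambda>\<delta>. (f x - f (x - \<delta>)) / \<delta>) \<longlongrightarrow> f') (at_right 0)"
  shows "((\<lambda>\<delta>. f (x - \<delta>)) \<longlongrightarrow> f x) (at_right 0)"
proof -
  have "((\<lambda>\<delta>. f x - \<delta> * ((f x - f (x - \<delta>)) / \<delta>)) \<longlongrightarrow> f x - 0 * f') (at_right 0)"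
    by (intro tendsto_intros assms tendsto_ident_at)
  moreover have "\<forall>\<^sub>F \<delta> in at_right 0. f x - \<delta> * ((f x - f (x - \<delta>)) / \<delta>) = f (x - \<delta>)"
    by (simp add: eventually_at_right_less)
  ultimately show ?thesis
    by (simp add: tendsto_cong)
qed

lemma discounted_backward_recursion_derivative:
  fixes D :: "real \<Rightarrow> real"
  assumes quotient: "((\<lambda>\<delta>. (D r - D (r - \<delta>)) / \<delta>) \<longlongrightarrow> D') (at_right 0)"
    and recursion: "\<forall>\<^sub>F \<delta> in at_right 0.
      D r = (1 / (1 + \<gamma> * \<delta>)) * ((1 - c * \<delta> * W) * D (r - \<delta>) + c * \<delta> * Q)"
  shows "\<gamma> * D r = - D' + c * (Q - W * D r)"
proof -
  have "((\<lambda>\<delta>. 1 + \<gamma> * \<delta>) \<longlongrightarrow> 1 + \<gamma> * 0) (at_right (0::real))"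
    by (intro tendsto_intros)
  then have "\<forall>\<^sub>F \<delta> in at_right 0. 1 + \<gamma> * \<delta> > 0"
    by (rule order_tendstoD) simp
  moreover have "\<forall>\<^sub>F \<delta> in at_right (0::real). \<delta> > 0"
    by (simp add: eventually_at_right_less)
  ultimately have "\<forall>\<^sub>F \<delta> in at_right 0.
      (D r - D (r - \<delta>)) / \<delta> = - \<gamma> * D r - c * W * D (r - \<delta>) + c * Q"
    using recursion
  proof eventually_elim
    case (elim \<delta>)
    then have "(1 + \<gamma> * \<delta>) * D r = (1 - c * \<delta> * W) * D (r - \<delta>) + c * \<delta> * Q"
      by (simp add: field_simps)
    then have "D r - D (r - \<delta>) = \<delta> * (- \<gamma> * D r - c * W * D (r - \<delta>) + c * Q)"
      by (simp add: algebra_simps)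
    then show ?case
      using elim by simp
  qed
  with quotient have "((\<lambda>\<delta>. - \<gamma> * D r - c * W * D (r - \<delta>) + c * Q) \<longlongrightarrow> D') (at_right 0)"
    by (simp add: tendsto_cong)
  moreover have "((\<lambda>\<delta>. - \<gamma> * D r - c * W * D (r - \<delta>) + c * Q) \<longlongrightarrow>
      - \<gamma> * D r - c * W * D r + c * Q) (at_right 0)"
    by (intro tendsto_intros backward_quotient_tendsto_imp_left_continuous[OF quotient])
  ultimately have "D' = - \<gamma> * D r - c * W * D r + c * Q"
    by (rule tendsto_unique[rotated 1]) simp
  then show ?thesis
    by (simp add: algebra_simps)
qed

theorem theorem2:
  fixes u \<gamma> lamA lamCCN lamCP \<mu> varpi T :: real
    and F G D D' b :: "real \<Rightarrow> real"
  assumes pos: "u > 0" "\<gamma> > 0" "lamA > 0" "lamCCN > 0" "lamCP > 0"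
    and mu: "0 < \<mu>" "\<mu> \<le> 1"
    and T: "T > 0"
    and F: "is_cdf F" "\<forall>x. F differentiable (at x)"
    and G: "is_cdf G" "continuous_on UNIV G"
    and D_deriv: "\<forall>r\<in>{0..T}. (D has_real_derivative D' r) (at r within {0..T})"
    and D0: "D 0 = u - varpi"
    and b_def: "\<forall>r. b r = exp (- \<gamma> * r) * u - D r"
    and b_cont: "continuous_on {0..T} b"
    and recursion: "\<forall>r\<in>{0<..T}. \<forall>\<^sub>F \<delta> in at_right 0. \<delta> * \<mu> * lamA < 1 \<longrightarrow>
         D r = (1 / (1 + \<gamma> * \<delta>)) *
           ((1 - \<mu> * lamA * \<delta> * Wwin lamCCN lamCP F G (b r)) * D (r - \<delta>)
            + \<mu> * lamA * \<delta> * (Wwin lamCCN lamCP F G (b r) * exp (- \<gamma> * r) * u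
                              - Pay lamCCN lamCP F G b T r))"
  shows "\<forall>r\<in>{0<..T}. \<gamma> * D r = - D' r + \<mu> * lamA *
           (Wwin lamCCN lamCP F G (b r) * (exp (- \<gamma> * r) * u - D r) - Pay lamCCN lamCP F G b T r)"
proof
  fix r assume r: "r \<in> {0<..T}"
  have quotient: "((\<lambda>\<delta>. (D r - D (r - \<delta>)) / \<delta>) \<longlongrightarrow> D' r) (at_right 0)"
    using D_deriv r by (intro has_real_derivative_imp_backward_quotient_tendsto) auto
  have "((\<lambda>\<delta>. \<delta> * \<mu> * lamA) \<longlongrightarrow> 0 * \<mu> * lamA) (at_right (0::real))"
    by (intro tendsto_intros)
  then have "\<forall>\<^sub>F \<delta> in at_right 0. \<delta> * \<mu> * lamA < 1"
    by (rule order_tendstoD) simp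
  with recursion r have "\<forall>\<^sub>F \<delta> in at_right 0. D r = (1 / (1 + \<gamma> * \<delta>)) *
      ((1 - \<mu> * lamA * \<delta> * Wwin lamCCN lamCP F G (b r)) * D (r - \<delta>)
       + \<mu> * lamA * \<delta> * (Wwin lamCCN lamCP F G (b r) * exp (- \<gamma> * r) * u
                         - Pay lamCCN lamCP F G b T r))"
    by (auto elim: eventually_mp)
  from discounted_backward_recursion_derivative[OF quotient this]
  show "\<gamma> * D r = - D' r + \<mu> * lamA *
      (Wwin lamCCN lamCP F G (b r) * (exp (- \<gamma> * r) * u - D r) - Pay lamCCN lamCP F G b T r)"
    by (simp add: algebra_simps)
qed

end
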